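(* There exists a universal constant $c_1>0$ such that for all integers $a\ge1$ and $i\ge1$, \[ e^{-c_1(2a)^{-2i/3}}\le g_{a,i}\le e^{c_1(2a)^{-2i/3}}. \] Consequently, $e^{-(c_1/4)/a^2}\le g_{a,i}\le e^{(c_1/4)/a^2}$ for all $a,i\ge1$.
   Context: For integers $a,i\ge1$ let $f_{a,i}=\frac1{2i}\sum_{d\mid i,\ d\text{ odd}}\mu(d)(2a)^{i/d}$, where $\mu$ is the Möbius function and the sum is over positive odd divisors $d$ of $i$, and define $g_{a,i}$ by $f_{a,i}=\frac{(2a)^i}{2i}g_{a,i}$. *)

theory Defs
  imports Complex_Main "HOL-Computational_Algebra.Squarefree" "HOL-Computational_Algebra.Primes"
begin

text \<open>Moebius function on positive integers (mu 0 = 0 by convention, never used).\<close>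
definition moebius_mu :: "nat \<Rightarrow> int" where
  "moebius_mu d = (if d = 0 then 0 else if squarefree d then (-1) ^ card (prime_factors d) else 0)"

definition f_ai :: "nat \<Rightarrow> nat \<Rightarrow> real" where
  "f_ai a i = (1 / (2 * real i)) *
     (\<Sum>d\<in>{d. d dvd i \<and> odd d}. real_of_int (moebius_mu d) * (2 * real a) ^ (i div d))"

definition g_ai :: "nat \<Rightarrow> nat \<Rightarrow> real" where
  "g_ai a i = f_ai a i * (2 * real i) / (2 * real a) ^ i"

end

theory Submission
  imports Defs
begin

text \<open>Write \<open>x = 2a\<close>. Since \<open>\<mu>(1) = 1\<close>, \<open>g\<^sub>a\<^sub>,\<^sub>i - 1\<close> is the sum of \<open>\<mu>(d) x\<^bsup>i/d\<^esup> / x\<^bsup>i\<^esup>\<close>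
  over the odd divisors \<open>d \<ge> 3\<close> of \<open>i\<close>. The exponents \<open>i/d\<close> are distinct and at most \<open>i/3\<close>,
  so this is dominated by a geometric sum, \<open>\<bar>g\<^sub>a\<^sub>,\<^sub>i - 1\<bar> \<le> 2 x\<^bsup>\<lfloor>i/3\<rfloor> - i\<^esup> \<le> 2 x\<^bsup>-2i/3\<^esup>\<close>,
  and \<open>\<bar>g - 1\<bar> \<le> t/2\<close> with \<open>t \<le> 1\<close> gives \<open>e\<^sup>-\<^sup>t \<le> g \<le> e\<^sup>t\<close>. Hence \<open>c\<^sub>1 = 4\<close> works;
  for \<open>i < 3\<close> the sum is empty and \<open>g\<^sub>a\<^sub>,\<^sub>i = 1\<close>.\<close>

lemma sum_power_atLeastAtMost_le_double:
  fixes x :: real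
  assumes "x \<ge> 2"
  shows "(\<Sum>j=1..m. x ^ j) \<le> 2 * x ^ m"
proof (induction m)
  case (Suc m)
  have "2 * x ^ m \<le> x ^ Suc m"
    using assms by (simp add: mult_right_mono)
  with Suc show ?case by simp
qed simp

lemma inj_on_div_divisors:
  assumes "i > (0::nat)"
  shows "inj_on (\<lambda>d. i div d) {d. d dvd i}"
proof (rule inj_onI)
  fix d e assume "d \<in> {d. d dvd i}" "e \<in> {d. d dvd i}" "i div d = i div e"
  then have "i div e * d = i" "i div e * e = i"
    by (metis dvd_div_mult_self mem_Collect_eq)+
  moreover from this(2) have "i div e \<noteq> 0"
    using assms by (metis mult_zero_left less_irrefl)
  ultimately show "d = e"
    by (metis mult_left_cancel)
qed

lemma sum_power_div_divisors_le:
  fixes x :: real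
  assumes x: "x \<ge> 2" and i: "i > 0" and S: "S \<subseteq> {d. d dvd i \<and> 3 \<le> d}"
  shows "(\<Sum>d\<in>S. x ^ (i div d)) \<le> 2 * x ^ (i div 3)"
proof -
  have inj: "inj_on (\<lambda>d. i div d) S"
    using inj_on_subset[OF inj_on_div_divisors[OF i]] S by blast
  have image: "(\<lambda>d. i div d) ` S \<subseteq> {1..i div 3}"
  proof
    fix j assume "j \<in> (\<lambda>d. i div d) ` S"
    then obtain d where "j = i div d" "d dvd i" "3 \<le> d"
      using S by blast
    moreover have "d \<le> i"
      using \<open>d dvd i\<close> i by (simp add: dvd_imp_le)
    ultimately show "j \<in> {1..i div 3}"
      by (simp add: div_le_mono2 div_greater_zero_iff Suc_le_eq)
  qed
  have "(\<Sum>d\<in>S. x ^ (i div d)) = (\<Sum>j\<in>(\<lambda>d. i div d) ` S. x ^ j)"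
    using inj by (simp add: sum.reindex)
  also have "\<dots> \<le> (\<Sum>j=1..i div 3. x ^ j)"
    using image x by (intro sum_mono2) auto
  also have "\<dots> \<le> 2 * x ^ (i div 3)"
    using x by (rule sum_power_atLeastAtMost_le_double)
  finally show ?thesis .
qed

lemma g_ai_eq_one_plus_sum:
  assumes "a \<ge> 1" "i \<ge> 1"
  shows "g_ai a i = 1 + (\<Sum>d\<in>{d. d dvd i \<and> odd d \<and> d \<noteq> 1}.
    real_of_int (moebius_mu d) * (2 * real a) ^ (i div d)) / (2 * real a) ^ i"
proof -
  define D where "D = {d. d dvd i \<and> odd d}"
  define h where "h d = real_of_int (moebius_mu d) * (2 * real a) ^ (i div d)" for d
  have "finite D"
    using assms by (auto simp: D_def intro: finite_subset[of _ "{..i}"] dest: dvd_imp_le)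
  moreover have "1 \<in> D"
    by (simp add: D_def)
  moreover have "g_ai a i = sum h D / (2 * real a) ^ i"
    using assms unfolding g_ai_def f_ai_def by (simp add: D_def h_def)
  ultimately have "g_ai a i = (h 1 + sum h (D - {1})) / (2 * real a) ^ i"
    by (simp add: sum.remove)
  also have "\<dots> = 1 + sum h (D - {1}) / (2 * real a) ^ i"
    using assms by (simp add: h_def moebius_mu_def add_divide_distrib)
  also have "D - {1} = {d. d dvd i \<and> odd d \<and> d \<noteq> 1}"
    by (auto simp: D_def)
  finally show ?thesis
    by (simp add: h_def)
qed

lemma g_ai_eq_1_if_less_3:
  assumes "a \<ge> 1" "i \<ge> 1" "i < 3"
  shows "g_ai a i = 1"
proof -
  have "d = 1" if "d dvd i" "odd d" for d
  proof -
    have "d \<le> 2"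
      using that assms dvd_imp_le[of d i] by simp
    with \<open>odd d\<close> show ?thesis
      by (auto elim!: oddE)
  qed
  then have "{d. d dvd i \<and> odd d \<and> d \<noteq> 1} = {}"
    by blast
  then show ?thesis
    using g_ai_eq_one_plus_sum[OF assms(1,2)] by (simp only: sum.empty div_0 add_0_right)
qed

lemma abs_g_ai_minus_1_le:
  assumes "a \<ge> 1" "i \<ge> 1"
  shows "\<bar>g_ai a i - 1\<bar> \<le> 2 * (2 * real a) ^ (i div 3) / (2 * real a) ^ i"
proof -
  define x where "x = 2 * real a"
  define S where "S = {d. d dvd i \<and> odd d \<and> d \<noteq> 1}"
  have x: "x \<ge> 2"
    using assms by (simp add: x_def)
  have "S \<subseteq> {d. d dvd i \<and> 3 \<le> d}"
    unfolding S_def by (auto elim!: oddE simp: Suc_le_eq)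
  then have "(\<Sum>d\<in>S. x ^ (i div d)) \<le> 2 * x ^ (i div 3)"
    using x assms by (intro sum_power_div_divisors_le) auto
  moreover have "\<bar>\<Sum>d\<in>S. real_of_int (moebius_mu d) * x ^ (i div d)\<bar> \<le> (\<Sum>d\<in>S. x ^ (i div d))"
  proof (rule order_trans[OF sum_abs sum_mono])
    fix d
    have "\<bar>real_of_int (moebius_mu d)\<bar> \<le> 1"
      by (simp add: moebius_mu_def)
    then show "\<bar>real_of_int (moebius_mu d) * x ^ (i div d)\<bar> \<le> x ^ (i div d)"
      using x by (simp add: abs_mult mult_left_le_one_le)
  qed
  moreover have "g_ai a i - 1 = (\<Sum>d\<in>S. real_of_int (moebius_mu d) * x ^ (i div d)) / x ^ i"
    using g_ai_eq_one_plus_sum[OF assms] by (simp add: x_def S_def)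
  ultimately show ?thesis
    using x by (simp add: x_def abs_divide divide_right_mono)
qed

lemma power_div_power_le_powr:
  fixes x :: real
  assumes "x \<ge> 1"
  shows "x ^ (i div 3) / x ^ i \<le> x powr (- 2 * real i / 3)"
proof -
  have "x ^ (i div 3) / x ^ i = x powr (real (i div 3) - real i)"
    using assms by (simp add: powr_diff powr_realpow)
  also have "\<dots> \<le> x powr (- 2 * real i / 3)"
  proof (rule powr_mono)
    have "real (3 * (i div 3)) \<le> real i"
      by (metis of_nat_mono div_times_less_eq_dividend mult.commute)
    then show "real (i div 3) - real i \<le> - 2 * real i / 3"
      by simp
  qed (use assms in simp)
  finally show ?thesis .
qed

lemma powr_le_inverse_square:
  fixes x :: real
  assumes "x \<ge> 1" "i \<ge> 3"
  shows "x powr (- 2 * real i / 3) \<le> 1 / x\<^sup>2"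
proof -
  have "x powr (- 2 * real i / 3) \<le> x powr (- 2)"
    using assms by (intro powr_mono) auto
  also have "\<dots> = 1 / x\<^sup>2"
    using assms by (simp add: powr_minus powr_realpow divide_inverse)
  finally show ?thesis .
qed

lemma exp_bounds_of_abs_diff_le:
  fixes g t :: real
  assumes "\<bar>g - 1\<bar> \<le> t / 2" "0 \<le> t" "t \<le> 1"
  shows "exp (- t) \<le> g \<and> g \<le> exp t"
proof
  have "1 + t \<le> exp t"
    by (rule exp_ge_add_one_self)
  then show "g \<le> exp t"
    using assms by linarith
  have "exp (- t) = 1 / exp t"
    by (simp add: exp_minus divide_inverse)
  also have "\<dots> \<le> 1 / (1 + t)"
    using \<open>1 + t \<le> exp t\<close> assms by (intro divide_left_mono) auto
  also have "\<dots> \<le> 1 - t / 2"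
  proof -
    \<comment> \<open>\<open>(1 - t/2)(1 + t) = 1 + t(1 - t)/2 \<ge> 1\<close> for \<open>0 \<le> t \<le> 1\<close>\<close>
    have "1 \<le> (1 - t / 2) * (1 + t)"
      using assms mult_nonneg_nonneg[of t "1 - t"] by (simp add: algebra_simps)
    then show ?thesis
      using assms by (simp add: divide_le_eq)
  qed
  also have "\<dots> \<le> g"
    using assms by linarith
  finally show "exp (- t) \<le> g" .
qed

lemma g_ai_exp_bounds:
  assumes "a \<ge> 1" "i \<ge> 1"
  shows "exp (- 4 * (2 * real a) powr (- 2 * real i / 3)) \<le> g_ai a i \<and>
    g_ai a i \<le> exp (4 * (2 * real a) powr (- 2 * real i / 3))"
proof (cases "i < 3")
  case True
  then show ?thesis
    using g_ai_eq_1_if_less_3[OF assms] by simp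
next
  case False
  define x where "x = 2 * real a"
  have x: "x \<ge> 2"
    using assms by (simp add: x_def)
  then have "\<bar>g_ai a i - 1\<bar> \<le> 4 * x powr (- 2 * real i / 3) / 2"
    using abs_g_ai_minus_1_le[OF assms] power_div_power_le_powr[of x i]
    by (simp add: x_def)
  moreover have "x powr (- 2 * real i / 3) \<le> 1 / x\<^sup>2"
    using powr_le_inverse_square[of x i] x False by simp
  moreover have "1 / x\<^sup>2 \<le> 1 / 4"
    using x mult_mono[of 2 x 2 x] by (simp add: divide_simps power2_eq_square)
  ultimately have "exp (- (4 * x powr (- 2 * real i / 3))) \<le> g_ai a i \<and>
      g_ai a i \<le> exp (4 * x powr (- 2 * real i / 3))"
    by (intro exp_bounds_of_abs_diff_le) auto
  then show ?thesis
    by (simp add: x_def)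
qed

lemma g_ai_exp_bounds_uniform:
  assumes "a \<ge> 1" "i \<ge> 1"
  shows "exp (- 1 / (real a)\<^sup>2) \<le> g_ai a i \<and> g_ai a i \<le> exp (1 / (real a)\<^sup>2)"
proof (cases "i < 3")
  case True
  then show ?thesis
    using g_ai_eq_1_if_less_3[OF assms] by simp
next
  case False
  have "4 * (2 * real a) powr (- 2 * real i / 3) \<le> 1 / (real a)\<^sup>2"
    using powr_le_inverse_square[of "2 * real a" i] False assms by (simp add: field_simps)
  then have "exp (- 1 / (real a)\<^sup>2) \<le> exp (- 4 * (2 * real a) powr (- 2 * real i / 3))"
    and "exp (4 * (2 * real a) powr (- 2 * real i / 3)) \<le> exp (1 / (real a)\<^sup>2)"
    by simp_all
  with g_ai_exp_bounds[OF assms] show ?thesis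
    by linarith
qed

theorem lemma3p1:
  shows "\<exists>c1::real. c1 > 0 \<and>
    (\<forall>a i :: nat. a \<ge> 1 \<longrightarrow> i \<ge> 1 \<longrightarrow>
       exp (- c1 * (2 * real a) powr (- 2 * real i / 3)) \<le> g_ai a i \<and>
       g_ai a i \<le> exp (c1 * (2 * real a) powr (- 2 * real i / 3))) \<and>
    (\<forall>a i :: nat. a \<ge> 1 \<longrightarrow> i \<ge> 1 \<longrightarrow>
       exp (- (c1 / 4) / (real a)^2) \<le> g_ai a i \<and>
       g_ai a i \<le> exp ((c1 / 4) / (real a)^2))"
  using g_ai_exp_bounds g_ai_exp_bounds_uniform by (intro exI[of _ 4]) simp

end
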